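(* Let $G_1=(V_1,E_1)$ and $G_2=(V_2,E_2)$ be finite simple graphs with degree sequences $d_1$ and $d_2$. If $d_1$ is a rearrangement of $d_2$ (i.e., there is a bijection $\pi:V_1\to V_2$ with $d_2(\pi(v))=d_1(v)$ for all $v$), then $\dim\mathcal{A}(\widehat G_1)=\dim\mathcal{A}(\widehat G_2)$.
   Context: For a simple graph $G=(V,E)$, $\widehat G$ is the complete graph $(V,\binom{V}{2})$ with pairs in $E$ colored red and other pairs colored blue. For a 2-colored graph $H=(V,F)$, the alternating cone $\mathcal{A}(H)\subseteq\mathbb{R}^F$ is the set of $x\ge0$ such that at each vertex the sum of $x(e)$ over incident red edges equals the sum over incident blue edges. *)

theory Defs
  imports "HOL-Analysis.Analysis" "HOL-Library.Function_Algebras"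
begin

definition simple_graph :: "'a set \<Rightarrow> 'a set set \<Rightarrow> bool" where
  "simple_graph V E \<longleftrightarrow> finite V \<and> (\<forall>e\<in>E. e \<subseteq> V \<and> card e = 2)"

definition degree :: "'a set set \<Rightarrow> 'a \<Rightarrow> nat" where
  "degree E v = card {e\<in>E. v \<in> e}"

definition pairs :: "'a set \<Rightarrow> 'a set set" where
  "pairs V = {e. e \<subseteq> V \<and> card e = 2}"

text \<open>The alternating cone of the 2-coloured complete graph \<open>\<widehat>G\<close> (red = E, blue = pairs V - E),
  as a subset of R^F with F = pairs V, represented by functions on 'a set vanishing off F.\<close>
definition alt_cone_hat :: "'a set \<Rightarrow> 'a set set \<Rightarrow> ('a set \<Rightarrow> real) set" where
  "alt_cone_hat V E = {x. (\<forall>e. e \<notin> pairs V \<longrightarrow> x e = 0) \<and> (\<forall>e\<in>pairs V. 0 \<le> x e) \<and>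
     (\<forall>v\<in>V. (\<Sum>e\<in>{e\<in>pairs V. v \<in> e \<and> e \<in> E}. x e) = (\<Sum>e\<in>{e\<in>pairs V. v \<in> e \<and> e \<notin> E}. x e))}"

definition fscale :: "real \<Rightarrow> ('b \<Rightarrow> real) \<Rightarrow> ('b \<Rightarrow> real)" where
  "fscale c f = (\<lambda>x. c * f x)"

definition fdim :: "('b \<Rightarrow> real) set \<Rightarrow> nat" where
  "fdim S = vector_space.dim fscale S"

end

theory Submission
  imports Defs
begin

(* Relabelling the vertices along the bijection transports the alternating cone linearly, so it
   suffices to compare two graphs E and E' on the same vertex set with the same degrees. Negating
   the coordinates of the edges in the symmetric difference of E and E' preserves the alternating
   condition when the colouring by E is replaced by the colouring by E'. The image of a point of
   the first cone need not be nonnegative, but it lies in the span of the second cone: the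
   indicator of the symmetric difference belongs to the second cone because the degrees agree, and
   adding a large multiple of it restores nonnegativity. Since dimension is that of the linear
   span, linear maps with linear left inverses give the inequalities in both directions. *)

context vector_space
begin

(* dim is 0 on sets without a finite basis, hence the finite spanning set W here and below. *)
lemma dim_le_dim_of_subset_span:
  assumes "V \<subseteq> span T" and "T \<subseteq> span W" and "finite W"
  shows "dim V \<le> dim T"
proof -
  obtain B where B: "B \<subseteq> T" "independent B" "T \<subseteq> span B" "card B = dim T"
    using basis_exists by blast
  have "finite B"
    using independent_span_bound[OF \<open>finite W\<close> \<open>independent B\<close>] B(1) assms(2) by blast
  moreover have "V \<subseteq> span B"
    using assms(1) B(3) span_mono span_span by blast
  ultimately show ?thesis
    using dim_le_card B(4) by metis
qed

end

context Vector_Spaces.linear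
begin

lemma dim_image_le_of_finite_span:
  assumes "V \<subseteq> vs1.span W" and "finite W"
  shows "vs2.dim (f ` V) \<le> vs1.dim V"
proof -
  obtain B where B: "B \<subseteq> V" "vs1.independent B" "V \<subseteq> vs1.span B" "card B = vs1.dim V"
    using vs1.basis_exists by blast
  have "finite B"
    using vs1.independent_span_bound[OF \<open>finite W\<close> \<open>vs1.independent B\<close>] B(1) assms(1) by blast
  have "vs2.dim (f ` V) \<le> card (f ` B)"
    using vs2.dim_le_card[OF spans_image[OF B(3)]] \<open>finite B\<close> by blast
  also have "\<dots> \<le> card B"
    using \<open>finite B\<close> by (rule card_image_le)
  finally show ?thesis
    using B(4) by simp
qed

end

context vector_space_pair
begin

lemma dim_le_of_linear_retraction:
  assumes "Vector_Spaces.linear s1 s2 L" and "Vector_Spaces.linear s2 s1 R"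
    and "\<forall>x\<in>S. R (L x) = x" and "L ` S \<subseteq> vs2.span T" and "T \<subseteq> vs2.span W" and "finite W"
  shows "vs1.dim S \<le> vs2.dim T"
proof -
  have "S = R ` L ` S"
    using assms(3) by force
  moreover have "L ` S \<subseteq> vs2.span W"
    using assms(4,5) vs2.span_mono vs2.span_span by blast
  ultimately have "vs1.dim S \<le> vs2.dim (L ` S)"
    using linear.dim_image_le_of_finite_span[OF assms(2) _ \<open>finite W\<close>] by metis
  also have "\<dots> \<le> vs2.dim T"
    using assms(4-6) by (rule vs2.dim_le_dim_of_subset_span)
  finally show ?thesis .
qed

end

lemma vector_space_fscale: "vector_space fscale"
  by unfold_locales (auto simp: fscale_def fun_eq_iff algebra_simps)

interpretation fs: vector_space fscale
  by (rule vector_space_fscale)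

lemma linear_fscale_iff:
  "Vector_Spaces.linear fscale fscale f \<longleftrightarrow>
     (\<forall>x y. f (x + y) = f x + f y) \<and> (\<forall>c x. f (fscale c x) = fscale c (f x))"
  by (simp add: Vector_Spaces.linear_iff vector_space_fscale)

lemma sum_apply: "(\<Sum>i\<in>A. g i) x = (\<Sum>i\<in>A. g i x)"
  by (induction A rule: infinite_finite_induct) auto

lemma mem_span_indicators:
  assumes "finite P" and "\<forall>p. p \<notin> P \<longrightarrow> x p = 0"
  shows "x \<in> fs.span ((\<lambda>p. indicator {p}) ` P)"
proof -
  have "x = (\<Sum>p\<in>P. fscale (x p) (indicator {p}))"
    using assms
    by (auto simp: fun_eq_iff sum_apply fscale_def indicator_def if_distrib sum.If_cases
        Int_insert_right cong: if_cong)
  also have "\<dots> \<in> fs.span ((\<lambda>p. indicator {p}) ` P)"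
    by (intro fs.span_sum fs.span_scale fs.span_base) auto
  finally show ?thesis .
qed

lemma fdim_le_of_linear_retraction:
  assumes "Vector_Spaces.linear fscale fscale L" and "Vector_Spaces.linear fscale fscale R"
    and "\<forall>x\<in>S. R (L x) = x" and "L ` S \<subseteq> fs.span T"
    and "finite P" and "\<forall>y\<in>T. \<forall>p. p \<notin> P \<longrightarrow> y p = 0"
  shows "fdim S \<le> fdim T"
proof -
  have "vector_space_pair fscale fscale"
    by (simp add: vector_space_pair_def vector_space_fscale)
  moreover have "T \<subseteq> fs.span ((\<lambda>p. indicator {p}) ` P)"
    using mem_span_indicators assms(5,6) by blast
  ultimately show ?thesis
    unfolding fdim_def
    by (rule vector_space_pair.dim_le_of_linear_retraction[OF _ assms(1-4) _ finite_imageI[OF assms(5)]])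
qed

lemma finite_pairs: "finite V \<Longrightarrow> finite (pairs V)"
  unfolding pairs_def by (rule finite_subset[of _ "Pow V"]) auto

definition alt_balance :: "'a set \<Rightarrow> 'a set set \<Rightarrow> ('a set \<Rightarrow> real) \<Rightarrow> 'a \<Rightarrow> real" where
  "alt_balance V E x v = (\<Sum>e | e \<in> pairs V \<and> v \<in> e. if e \<in> E then x e else - x e)"

lemma alt_balance_eq_diff:
  assumes "finite V"
  shows "alt_balance V E x v =
    (\<Sum>e\<in>{e\<in>pairs V. v \<in> e \<and> e \<in> E}. x e) - (\<Sum>e\<in>{e\<in>pairs V. v \<in> e \<and> e \<notin> E}. x e)"
proof -
  have "finite {e. e \<in> pairs V \<and> v \<in> e}"
    using finite_pairs[OF assms] by simp
  then show ?thesis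
    unfolding alt_balance_def by (simp add: sum.If_cases sum_negf Int_def conj_ac)
qed

lemma alt_cone_hat_iff:
  assumes "finite V"
  shows "x \<in> alt_cone_hat V E \<longleftrightarrow> (\<forall>e. e \<notin> pairs V \<longrightarrow> x e = 0) \<and> (\<forall>e\<in>pairs V. 0 \<le> x e) \<and>
     (\<forall>v\<in>V. alt_balance V E x v = 0)"
  unfolding alt_cone_hat_def by (simp add: alt_balance_eq_diff[OF assms])

lemma alt_cone_hat_nonneg: "x \<in> alt_cone_hat V E \<Longrightarrow> 0 \<le> x e"
  unfolding alt_cone_hat_def by (cases "e \<in> pairs V") auto

lemma alt_balance_add: "alt_balance V E (x + y) v = alt_balance V E x v + alt_balance V E y v"
  unfolding alt_balance_def by (simp add: sum.distrib[symmetric] if_distrib cong: if_cong)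

lemma alt_balance_fscale: "alt_balance V E (fscale c x) v = c * alt_balance V E x v"
  unfolding alt_balance_def by (simp add: sum_distrib_left fscale_def if_distrib cong: if_cong)

definition switch :: "'a set \<Rightarrow> 'a set \<Rightarrow> ('a \<Rightarrow> real) \<Rightarrow> 'a \<Rightarrow> real" where
  "switch E E' x e = (if (e \<in> E) = (e \<in> E') then x e else - x e)"

lemma switch_switch [simp]: "switch E E' (switch E E' x) = x"
  by (simp add: switch_def fun_eq_iff)

lemma linear_switch: "Vector_Spaces.linear fscale fscale (switch E E')"
  unfolding linear_fscale_iff switch_def fscale_def by (simp add: fun_eq_iff)

lemma alt_balance_switch: "alt_balance V E' (switch E E' x) v = alt_balance V E x v"
  unfolding alt_balance_def switch_def by (rule sum.cong) auto

lemma degree_eq_sum_indicator: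
  assumes "finite V" and "E \<subseteq> pairs V"
  shows "real (degree E v) = (\<Sum>e | e \<in> pairs V \<and> v \<in> e. indicator E e)"
proof -
  have "finite {e. e \<in> pairs V \<and> v \<in> e}"
    using finite_pairs[OF assms(1)] by simp
  then have "(\<Sum>e | e \<in> pairs V \<and> v \<in> e. indicator E e) =
      (\<Sum>e \<in> {e. e \<in> pairs V \<and> v \<in> e} \<inter> E. 1::real)"
    by (simp add: sum.inter_restrict indicator_def)
  also have "{e. e \<in> pairs V \<and> v \<in> e} \<inter> E = {e\<in>E. v \<in> e}"
    using assms(2) by auto
  finally show ?thesis
    by (simp add: degree_def)
qed

lemma alt_balance_indicator_sym_diff:
  assumes "finite V" and "E \<subseteq> pairs V" and "E' \<subseteq> pairs V"
  shows "alt_balance V E' (indicator (sym_diff E E')) v = real (degree E' v) - real (degree E v)"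
proof -
  have "alt_balance V E' (indicator (sym_diff E E')) v =
      (\<Sum>e | e \<in> pairs V \<and> v \<in> e. indicator E' e - indicator E e)"
    unfolding alt_balance_def by (rule sum.cong) (auto simp: indicator_def)
  then show ?thesis
    by (simp add: sum_subtractf degree_eq_sum_indicator[OF assms(1,2)]
        degree_eq_sum_indicator[OF assms(1,3)])
qed

lemma indicator_sym_diff_mem_alt_cone_hat:
  assumes "finite V" and "E \<subseteq> pairs V" and "E' \<subseteq> pairs V"
    and "\<forall>v\<in>V. degree E v = degree E' v"
  shows "indicator (sym_diff E E') \<in> alt_cone_hat V E'"
  using assms by (auto simp: alt_cone_hat_iff alt_balance_indicator_sym_diff indicator_def)

lemma switch_mem_span_alt_cone_hat:
  assumes "finite V" and "E \<subseteq> pairs V" and "E' \<subseteq> pairs V"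
    and "\<forall>v\<in>V. degree E v = degree E' v"
    and x: "x \<in> alt_cone_hat V E"
  shows "switch E E' x \<in> fs.span (alt_cone_hat V E')"
proof -
  define w :: "'a set \<Rightarrow> real" where "w = indicator (sym_diff E E')"
  define t where "t = (\<Sum>e\<in>pairs V. x e)"
  have x_cone: "\<forall>e. e \<notin> pairs V \<longrightarrow> x e = 0" "\<forall>e\<in>pairs V. 0 \<le> x e"
      "\<forall>v\<in>V. alt_balance V E x v = 0"
    using x assms(1) by (simp_all add: alt_cone_hat_iff)
  have x_le_t: "x e \<le> t" if "e \<in> pairs V" for e
    unfolding t_def using x_cone(2) that finite_pairs[OF assms(1)] by (intro member_le_sum) auto
  have w: "w \<in> alt_cone_hat V E'"
    unfolding w_def using assms(1-4) by (rule indicator_sym_diff_mem_alt_cone_hat)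
  have "\<forall>v\<in>V. alt_balance V E' (switch E E' x + fscale t w) v = 0"
    using w x_cone(3) assms(1)
    by (simp add: alt_cone_hat_iff alt_balance_add alt_balance_fscale alt_balance_switch)
  then have "switch E E' x + fscale t w \<in> alt_cone_hat V E'"
    using assms(1-3) x_cone(1,2) x_le_t
    by (auto simp: alt_cone_hat_iff switch_def fscale_def w_def indicator_def subset_iff)
  then have "(switch E E' x + fscale t w) - fscale t w \<in> fs.span (alt_cone_hat V E')"
    using w by (intro fs.span_diff fs.span_scale fs.span_base)
  then show ?thesis
    by simp
qed

lemma fdim_alt_cone_hat_le_of_same_degrees:
  assumes "finite V" and "E \<subseteq> pairs V" and "E' \<subseteq> pairs V"
    and "\<forall>v\<in>V. degree E v = degree E' v"
  shows "fdim (alt_cone_hat V E) \<le> fdim (alt_cone_hat V E')"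
proof (rule fdim_le_of_linear_retraction[OF linear_switch[of E E'] linear_switch[of E E']])
  show "switch E E' ` alt_cone_hat V E \<subseteq> fs.span (alt_cone_hat V E')"
    using switch_mem_span_alt_cone_hat[OF assms] by blast
qed (use finite_pairs[OF assms(1)] in \<open>auto simp: alt_cone_hat_def\<close>)

lemma fdim_alt_cone_hat_eq_of_same_degrees:
  assumes "finite V" and "E \<subseteq> pairs V" and "E' \<subseteq> pairs V"
    and "\<forall>v\<in>V. degree E v = degree E' v"
  shows "fdim (alt_cone_hat V E) = fdim (alt_cone_hat V E')"
  using assms by (intro antisym fdim_alt_cone_hat_le_of_same_degrees) auto

lemma bij_betw_image_pairs:
  assumes "bij_betw \<pi> V1 V2"
  shows "bij_betw ((`) \<pi>) (pairs V1) (pairs V2)"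
proof -
  have card_image: "card (\<pi> ` f) = card f" if "f \<subseteq> V1" for f
    using assms that by (meson bij_betw_imp_inj_on card_image inj_on_subset)
  have "pairs V1 \<subseteq> Pow V1"
    by (auto simp: pairs_def)
  moreover have "(`) \<pi> ` pairs V1 = pairs V2"
  proof
    show "(`) \<pi> ` pairs V1 \<subseteq> pairs V2"
      using card_image bij_betw_imp_surj_on[OF assms] by (auto simp: pairs_def)
  next
    show "pairs V2 \<subseteq> (`) \<pi> ` pairs V1"
    proof
      fix e assume e: "e \<in> pairs V2"
      have "e \<in> (`) \<pi> ` Pow V1"
        using e bij_betw_imp_surj_on[OF bij_betw_Pow[OF assms]] by (simp add: pairs_def)
      then obtain f where "f \<subseteq> V1" "e = \<pi> ` f"
        by blast
      then show "e \<in> (`) \<pi> ` pairs V1"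
        using card_image e by (auto simp: pairs_def)
    qed
  qed
  ultimately show ?thesis
    by (rule bij_betw_subset[OF bij_betw_Pow[OF assms]])
qed

lemma bij_betw_image_incident_pairs:
  assumes "bij_betw \<pi> V1 V2" and "v \<in> V1"
  shows "bij_betw ((`) \<pi>) {e\<in>pairs V1. v \<in> e} {e\<in>pairs V2. \<pi> v \<in> e}"
  using bij_betw_image_pairs[OF assms(1)]
proof (rule bij_betw_Collect)
  show "\<pi> v \<in> \<pi> ` f \<longleftrightarrow> v \<in> f" if "f \<in> pairs V1" for f
    using inj_on_image_mem_iff[OF bij_betw_imp_inj_on[OF assms(1)] assms(2)] that
    by (auto simp: pairs_def)
qed

lemma degree_relabel:
  assumes "inj_on \<pi> V" and "E \<subseteq> Pow V" and "v \<in> V"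
  shows "degree ((`) \<pi> ` E) (\<pi> v) = degree E v"
proof -
  have "\<pi> v \<in> \<pi> ` f \<longleftrightarrow> v \<in> f" if "f \<in> E" for f
    using inj_on_image_mem_iff[OF assms(1,3)] assms(2) that by blast
  then have "{e \<in> (`) \<pi> ` E. \<pi> v \<in> e} = (`) \<pi> ` {f\<in>E. v \<in> f}"
    by auto
  moreover have "inj_on ((`) \<pi>) {f\<in>E. v \<in> f}"
    by (rule inj_on_subset[OF inj_on_image_Pow[OF assms(1)]]) (use assms(2) in auto)
  ultimately show ?thesis
    by (simp add: degree_def card_image)
qed

lemma alt_balance_relabel:
  assumes "bij_betw \<pi> V1 V2" and "E \<subseteq> Pow V1" and "v \<in> V1"
    and "\<forall>f\<in>pairs V1. y (\<pi> ` f) = x f"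
  shows "alt_balance V2 ((`) \<pi> ` E) y (\<pi> v) = alt_balance V1 E x v"
proof -
  have "\<pi> ` f \<in> (`) \<pi> ` E \<longleftrightarrow> f \<in> E" if "f \<in> pairs V1" for f
    using inj_on_image_Pow[OF bij_betw_imp_inj_on[OF assms(1)]] assms(2) that
    by (auto simp: pairs_def inj_on_image_mem_iff)
  then have "alt_balance V1 E x v =
      (\<Sum>f | f \<in> pairs V1 \<and> v \<in> f. if \<pi> ` f \<in> (`) \<pi> ` E then y (\<pi> ` f) else - y (\<pi> ` f))"
    unfolding alt_balance_def using assms(4) by (intro sum.cong) auto
  also have "\<dots> = alt_balance V2 ((`) \<pi> ` E) y (\<pi> v)"
    unfolding alt_balance_def
    by (rule sum.reindex_bij_betw[OF bij_betw_image_incident_pairs[OF assms(1,3)]])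
  finally show ?thesis ..
qed

lemma fdim_alt_cone_hat_le_relabel:
  assumes "finite V1" and "bij_betw \<pi> V1 V2" and "E \<subseteq> Pow V1"
  shows "fdim (alt_cone_hat V1 E) \<le> fdim (alt_cone_hat V2 ((`) \<pi> ` E))"
proof -
  obtain \<psi> where \<psi>: "\<forall>v\<in>V1. \<pi> v \<in> V2 \<and> \<psi> (\<pi> v) = v"
    "\<forall>w\<in>V2. \<psi> w \<in> V1 \<and> \<pi> (\<psi> w) = w"
    using bij_betw_iff_bijections[THEN iffD1, OF assms(2)] by blast
  define L where "L x = (\<lambda>e. indicator (pairs V2) e * x (\<psi> ` e))" for x :: "'a set \<Rightarrow> real"
  define R where "R y = (\<lambda>f. indicator (pairs V1) f * y (\<pi> ` f))" for y :: "'b set \<Rightarrow> real"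
  have \<pi>_pairs: "\<pi> ` f \<in> pairs V2" if "f \<in> pairs V1" for f
    using bij_betw_apply[OF bij_betw_image_pairs[OF assms(2)] that] .
  have \<psi>_\<pi>: "\<psi> ` \<pi> ` f = f" if "f \<in> pairs V1" for f
    using \<psi>(1) that unfolding image_image pairs_def by (simp add: subset_iff cong: image_cong)
  have L_\<pi>: "\<forall>f\<in>pairs V1. L x (\<pi> ` f) = x f" for x
    using \<pi>_pairs \<psi>_\<pi> by (simp add: L_def)
  have lin: "Vector_Spaces.linear fscale fscale L" "Vector_Spaces.linear fscale fscale R"
    unfolding linear_fscale_iff L_def R_def fscale_def by (simp_all add: fun_eq_iff algebra_simps)
  have "R (L x) = x" if x: "x \<in> alt_cone_hat V1 E" for x
  proof
    fix f
    show "R (L x) f = x f"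
      using x L_\<pi> by (cases "f \<in> pairs V1") (simp_all add: R_def alt_cone_hat_def)
  qed
  moreover have "L x \<in> alt_cone_hat V2 ((`) \<pi> ` E)" if x: "x \<in> alt_cone_hat V1 E" for x
  proof -
    have "alt_balance V2 ((`) \<pi> ` E) (L x) w = 0" if "w \<in> V2" for w
      using alt_balance_relabel[OF assms(2,3) _ L_\<pi>] x \<psi>(2) that assms(1)
      by (metis alt_cone_hat_iff)
    moreover have "0 \<le> x (\<psi> ` e)" for e
      using x by (rule alt_cone_hat_nonneg)
    ultimately show ?thesis
      using bij_betw_finite[OF assms(2)] assms(1) by (simp add: alt_cone_hat_iff L_def)
  qed
  ultimately show ?thesis
    using finite_pairs[of V2] bij_betw_finite[OF assms(2)] assms(1)
    by (intro fdim_le_of_linear_retraction[OF lin])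
      (auto intro: fs.span_base simp: alt_cone_hat_def)
qed

lemma fdim_alt_cone_hat_relabel:
  assumes "finite V1" and "bij_betw \<pi> V1 V2" and "E \<subseteq> Pow V1"
  shows "fdim (alt_cone_hat V2 ((`) \<pi> ` E)) = fdim (alt_cone_hat V1 E)"
proof (rule antisym)
  define \<psi> where "\<psi> = the_inv_into V1 \<pi>"
  have "bij_betw \<psi> V2 V1"
    unfolding \<psi>_def using assms(2) by (rule bij_betw_the_inv_into)
  moreover have "(`) \<psi> ` (`) \<pi> ` E = E"
    using assms(2,3) the_inv_into_f_f[OF bij_betw_imp_inj_on[OF assms(2)]]
    by (force simp: \<psi>_def image_image subset_iff)
  moreover have "(`) \<pi> ` E \<subseteq> Pow V2"
    using assms(2,3) bij_betw_imp_surj_on by blast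
  ultimately show "fdim (alt_cone_hat V2 ((`) \<pi> ` E)) \<le> fdim (alt_cone_hat V1 E)"
    using fdim_alt_cone_hat_le_relabel bij_betw_finite assms(1,2) by metis
qed (rule fdim_alt_cone_hat_le_relabel[OF assms])

theorem lemma2p7:
  fixes V1 :: "'a set" and E1 :: "'a set set" and V2 :: "'b set" and E2 :: "'b set set"
  assumes "simple_graph V1 E1" and "simple_graph V2 E2"
    and "bij_betw \<pi> V1 V2"
    and "\<forall>v\<in>V1. degree E2 (\<pi> v) = degree E1 v"
  shows "fdim (alt_cone_hat V1 E1) = fdim (alt_cone_hat V2 E2)"
proof -
  have "finite V1" "E1 \<subseteq> pairs V1" "finite V2" "E2 \<subseteq> pairs V2"
    using assms(1,2) by (auto simp: simple_graph_def pairs_def)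
  have "fdim (alt_cone_hat V1 E1) = fdim (alt_cone_hat V2 ((`) \<pi> ` E1))"
    using \<open>finite V1\<close> assms(3) \<open>E1 \<subseteq> pairs V1\<close>
    by (intro fdim_alt_cone_hat_relabel[symmetric]) (auto simp: pairs_def)
  also have "\<dots> = fdim (alt_cone_hat V2 E2)"
  proof (rule fdim_alt_cone_hat_eq_of_same_degrees[OF \<open>finite V2\<close> _ \<open>E2 \<subseteq> pairs V2\<close>])
    show "(`) \<pi> ` E1 \<subseteq> pairs V2"
      using bij_betw_imp_surj_on[OF bij_betw_image_pairs[OF assms(3)]] \<open>E1 \<subseteq> pairs V1\<close>
      by blast
    have "degree ((`) \<pi> ` E1) (\<pi> v) = degree E2 (\<pi> v)" if "v \<in> V1" for v
      using degree_relabel[OF bij_betw_imp_inj_on[OF assms(3)] _ that] \<open>E1 \<subseteq> pairs V1\<close>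
        assms(4) that
      by (auto simp: pairs_def)
    then show "\<forall>w\<in>V2. degree ((`) \<pi> ` E1) w = degree E2 w"
      using bij_betw_imp_surj_on[OF assms(3)] by blast
  qed
  finally show ?thesis .
qed

end
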